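(* For every $c\in\mathbb{N}$ there exists a planar graph $G$ such that for every tree-partition $\mathcal{P}$ of $G$ and every partition $\mathcal{Q}$ of $G$ with $|P\cap Q|\leq c$ for all $P\in\mathcal{P}$ and $Q\in\mathcal{Q}$, there is a $4$-clique $\{v_1,v_2,v_3,v_4\}$ in $G$ whose four vertices lie in four pairwise distinct parts of $\mathcal{Q}$.
   Context: All graphs are finite, simple and undirected. A partition $\mathcal{P}$ of a graph $G$ is a partition of $V(G)$ into parts. The quotient $G/\mathcal{P}$ is the graph whose vertices are the non-empty parts of $\mathcal{P}$, where distinct parts $P_1,P_2$ are adjacent iff some $v_1\in P_1$ and $v_2\in P_2$ satisfy $v_1v_2\in E(G)$. $\mathcal{P}$ is a tree-partition if $G/\mathcal{P}$ is isomorphic to a subgraph of a tree. *)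

theory Defs
  imports "HOL-Analysis.Analysis"
begin

definition simple_graph :: "'a set \<Rightarrow> 'a set set \<Rightarrow> bool" where
  "simple_graph V E \<longleftrightarrow> finite V \<and> (\<forall>e\<in>E. \<exists>u v. u \<in> V \<and> v \<in> V \<and> u \<noteq> v \<and> e = {u, v})"

definition planar :: "'a set \<Rightarrow> 'a set set \<Rightarrow> bool" where
  "planar V E \<longleftrightarrow> simple_graph V E \<and>
     (\<exists>(pos :: 'a \<Rightarrow> complex) (\<gamma> :: 'a set \<Rightarrow> real \<Rightarrow> complex).
        inj_on pos V \<and>
        (\<forall>e\<in>E. arc (\<gamma> e) \<and> {pathstart (\<gamma> e), pathfinish (\<gamma> e)} = pos ` e \<and>
                 path_image (\<gamma> e) \<inter> pos ` V = pos ` e) \<and>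
        (\<forall>e\<in>E. \<forall>f\<in>E. e \<noteq> f \<longrightarrow> path_image (\<gamma> e) \<inter> path_image (\<gamma> f) \<subseteq> pos ` (e \<inter> f)))"

text \<open>A partition of V into parts (parts are pairwise disjoint and cover V;
  empty parts are harmless and are ignored by the quotient).\<close>
definition is_partition :: "'a set \<Rightarrow> 'a set set \<Rightarrow> bool" where
  "is_partition V P \<longleftrightarrow> (\<forall>X\<in>P. X \<subseteq> V) \<and> \<Union>P = V \<and>
     (\<forall>X\<in>P. \<forall>Y\<in>P. X \<noteq> Y \<longrightarrow> X \<inter> Y = {})"

definition quotient_verts :: "'a set set \<Rightarrow> 'a set set" where
  "quotient_verts P = {X \<in> P. X \<noteq> {}}"

definition quotient_edges :: "'a set set \<Rightarrow> 'a set set \<Rightarrow> 'a set set set" where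
  "quotient_edges E P = {{X, Y} | X Y. X \<in> quotient_verts P \<and> Y \<in> quotient_verts P \<and> X \<noteq> Y \<and>
      (\<exists>x\<in>X. \<exists>y\<in>Y. {x, y} \<in> E)}"

definition connected_graph :: "'b set \<Rightarrow> 'b set set \<Rightarrow> bool" where
  "connected_graph V E \<longleftrightarrow> (\<forall>u\<in>V. \<forall>v\<in>V. (u, v) \<in> {(x, y). {x, y} \<in> E}\<^sup>*)"

definition is_cycle :: "'b set set \<Rightarrow> 'b list \<Rightarrow> bool" where
  "is_cycle E cs \<longleftrightarrow> length cs \<ge> 3 \<and> distinct cs \<and>
     (\<forall>i < length cs - 1. {cs ! i, cs ! (i + 1)} \<in> E) \<and> {last cs, hd cs} \<in> E"

definition is_tree :: "'b set \<Rightarrow> 'b set set \<Rightarrow> bool" where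
  "is_tree V E \<longleftrightarrow> V \<noteq> {} \<and> (\<forall>e\<in>E. \<exists>u v. u \<in> V \<and> v \<in> V \<and> u \<noteq> v \<and> e = {u, v}) \<and>
     connected_graph V E \<and> (\<nexists>cs. is_cycle E cs)"

definition iso_to_subgraph :: "'a set \<Rightarrow> 'a set set \<Rightarrow> 'b set \<Rightarrow> 'b set set \<Rightarrow> bool" where
  "iso_to_subgraph V E TV TE \<longleftrightarrow> (\<exists>f. inj_on f V \<and> f ` V \<subseteq> TV \<and> (\<forall>e\<in>E. f ` e \<in> TE))"

text \<open>Tree-partition: the quotient is isomorphic to a subgraph of a tree. The tree's vertices
  are taken from the type of parts plus nat (extra vertices), which is large enough.\<close>
definition tree_partition :: "'a set \<Rightarrow> 'a set set \<Rightarrow> 'a set set \<Rightarrow> bool" where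
  "tree_partition V E P \<longleftrightarrow> is_partition V P \<and>
     (\<exists>(TV :: ('a set + nat) set) TE. is_tree TV TE \<and>
        iso_to_subgraph (quotient_verts P) (quotient_edges E P) TV TE)"

end

theory Submission
  imports Defs "HOL-Library.Countable"
begin

text \<open>The graph is a stacked triangulation: starting from a triangle, a new vertex is placed
  in every inner face and joined to its three corners, up to depth \<open>3M\<close> with
  \<open>M = 8c\<^sup>2 + 6c + 1\<close>. Since the quotient by a tree-partition \<open>P\<close> has no triangle, every
  triangle of \<open>G\<close> has two vertices in a common part of \<open>P\<close>; hence the common neighbours of an
  edge \<open>uw\<close> lie in the parts of \<open>u\<close> and \<open>w\<close>, which together meet each part of \<open>Q\<close> in at
  most \<open>2c\<close> vertices. In the triangulation every edge \<open>uw\<close> is rich: its common neighbours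
  contain a path \<open>q\<^sub>1 \<dots> q\<^sub>M\<close>, and the edges \<open>uq\<^sub>i\<close>, \<open>wq\<^sub>i\<close> are rich again, two levels deep.
  If \<open>u\<close> and \<open>w\<close> lie in distinct parts of \<open>Q\<close>, the path has too many vertices to avoid an
  edge \<open>qq'\<close> whose ends lie in two further distinct parts of \<open>Q\<close>, and \<open>{u, w, q, q'}\<close> is the
  required clique. If \<open>u\<close> and \<open>w\<close> share their part of \<open>P\<close> or of \<open>Q\<close>, either the same count
  applies directly or some \<open>q\<^sub>i\<close> lies outside that part, and passing to the edge \<open>uq\<^sub>i\<close> or
  \<open>wq\<^sub>i\<close>, at most twice, reaches the previous case.\<close>

lemma simple_graph_edge:
  "simple_graph V E \<Longrightarrow> e \<in> E \<Longrightarrow> \<exists>u v. u \<in> V \<and> v \<in> V \<and> u \<noteq> v \<and> e = {u, v}"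
  unfolding simple_graph_def by simp

section \<open>Rainbow cliques at rich edges\<close>

definition rainbow_K4 :: "'a set set \<Rightarrow> 'a set set \<Rightarrow> bool" where
  "rainbow_K4 E Q \<longleftrightarrow> (\<exists>v1 v2 v3 v4 Q1 Q2 Q3 Q4.
         {v1, v2} \<in> E \<and> {v1, v3} \<in> E \<and> {v1, v4} \<in> E \<and>
         {v2, v3} \<in> E \<and> {v2, v4} \<in> E \<and> {v3, v4} \<in> E \<and>
         Q1 \<in> Q \<and> Q2 \<in> Q \<and> Q3 \<in> Q \<and> Q4 \<in> Q \<and>
         v1 \<in> Q1 \<and> v2 \<in> Q2 \<and> v3 \<in> Q3 \<and> v4 \<in> Q4 \<and>
         Q1 \<noteq> Q2 \<and> Q1 \<noteq> Q3 \<and> Q1 \<noteq> Q4 \<and> Q2 \<noteq> Q3 \<and> Q2 \<noteq> Q4 \<and> Q3 \<noteq> Q4)"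

definition book :: "'a set set \<Rightarrow> nat \<Rightarrow> 'a \<Rightarrow> 'a \<Rightarrow> 'a list \<Rightarrow> bool" where
  "book E m u w qs \<longleftrightarrow> {u, w} \<in> E \<and> length qs = m \<and> distinct qs \<and>
     (\<forall>q\<in>set qs. {u, q} \<in> E \<and> {w, q} \<in> E) \<and> successively (\<lambda>x y. {x, y} \<in> E) qs"

fun rich :: "'a set set \<Rightarrow> nat \<Rightarrow> nat \<Rightarrow> 'a \<Rightarrow> 'a \<Rightarrow> bool" where
  "rich E m 0 u w \<longleftrightarrow> (\<exists>qs. book E m u w qs)"
| "rich E m (Suc n) u w \<longleftrightarrow>
     (\<exists>qs. book E m u w qs \<and> (\<forall>q\<in>set qs. rich E m n u q \<and> rich E m n w q))"

lemma book_sym: "book E m u w qs \<longleftrightarrow> book E m w u qs"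
  unfolding book_def by (auto simp: insert_commute)

lemma rich_sym: "rich E m n u w \<longleftrightarrow> rich E m n w u"
  by (cases n) (auto simp: book_sym)

lemma rich_imp_book: "rich E m n u w \<Longrightarrow> \<exists>qs. book E m u w qs"
  by (cases n) auto

lemma book_image:
  assumes "inj h" "book E m u w qs"
  shows "book ((`) h ` E) m (h u) (h w) (map h qs)"
proof -
  have edge: "{h x, h y} \<in> (`) h ` E" if "{x, y} \<in> E" for x y
    using that by (metis image_empty image_eqI image_insert)
  have "inj_on h (set qs)" using assms(1) by (rule inj_on_subset) simp
  with assms(2) show ?thesis
    by (auto simp: book_def successively_map distinct_map edge elim!: successively_mono)
qed

lemma rich_image: "inj h \<Longrightarrow> rich E m n u w \<Longrightarrow> rich ((`) h ` E) m n (h u) (h w)"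
proof (induction n arbitrary: u w)
  case 0
  then show ?case using book_image by fastforce
next
  case (Suc n)
  then obtain qs where "book E m u w qs" "\<forall>q\<in>set qs. rich E m n u q \<and> rich E m n w q"
    by auto
  with Suc show ?case
    by (auto intro!: exI[of _ "map h qs"] book_image)
qed

text \<open>Maximal runs of elements with colour outside \<open>B\<close> are monochromatic, and every run but
  the first is preceded by an element with colour in \<open>B\<close>.\<close>

lemma card_colours_outside_le:
  assumes "successively (\<lambda>x y. f x \<notin> B \<longrightarrow> f y \<notin> B \<longrightarrow> f x = f y) xs"
  shows "card (f ` {x\<in>set xs. f x \<notin> B})
           \<le> length (filter (\<lambda>x. f x \<in> B) xs) + (if xs \<noteq> [] \<and> f (hd xs) \<notin> B then 1 else 0)"
  using assms
proof (induction xs)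
  case Nil
  then show ?case by simp
next
  case (Cons x xs)
  define S where "S = f ` {x\<in>set xs. f x \<notin> B}"
  define L where "L = length (filter (\<lambda>x. f x \<in> B) xs)"
  have IH: "card S \<le> L + (if xs \<noteq> [] \<and> f (hd xs) \<notin> B then 1 else 0)"
    using Cons.IH Cons.prems by (auto simp: successively_Cons S_def L_def)
  show ?case
  proof (cases "f x \<in> B")
    case True
    then have "f ` {y\<in>set (x # xs). f y \<notin> B} = S" by (auto simp: S_def)
    then show ?thesis using IH True by (simp add: L_def split: if_splits)
  next
    case False
    have S': "f ` {y\<in>set (x # xs). f y \<notin> B} = insert (f x) S"
      using False by (auto simp: S_def)
    have "card (insert (f x) S) \<le> L + 1"
    proof (cases "xs \<noteq> [] \<and> f (hd xs) \<notin> B")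
      case True
      then have "f x = f (hd xs)" "hd xs \<in> set xs"
        using Cons.prems False by (auto simp: successively_Cons)
      then have "insert (f x) S = S" using True by (auto simp: S_def)
      then show ?thesis using IH True by simp
    next
      case False
      then have "card S \<le> L" using IH by auto
      moreover have "card (insert (f x) S) \<le> card S + 1"
        by (simp add: S_def card_insert_if)
      ultimately show ?thesis by simp
    qed
    then show ?thesis using False by (subst S') (simp add: L_def)
  qed
qed

lemma length_le_if_runs_monochromatic:
  assumes "distinct xs"
    and colour_class: "\<And>y. card {x\<in>set xs. f x = y} \<le> K"
    and runs: "successively (\<lambda>x y. f x \<notin> {b1, b2} \<longrightarrow> f y \<notin> {b1, b2} \<longrightarrow> f x = f y) xs"
  shows "length xs \<le> 2 * K + K * (2 * K + 1)"
proof -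
  define marked where "marked = {x\<in>set xs. f x \<in> {b1, b2}}"
  define unmarked where "unmarked = {x\<in>set xs. f x \<notin> {b1, b2}}"
  have "unmarked \<union> marked = set xs"
    by (auto simp: marked_def unmarked_def)
  then have "length xs = card (unmarked \<union> marked)"
    using \<open>distinct xs\<close> by (simp add: distinct_card)
  also have "\<dots> = card unmarked + card marked"
    by (rule card_Un_disjoint) (auto simp: marked_def unmarked_def)
  finally have len: "length xs = card unmarked + card marked" .
  have "card marked = card ({x\<in>set xs. f x = b1} \<union> {x\<in>set xs. f x = b2})"
    by (rule arg_cong[where f = card]) (auto simp: marked_def)
  also have "\<dots> \<le> card {x\<in>set xs. f x = b1} + card {x\<in>set xs. f x = b2}"
    by (rule card_Un_le)
  finally have marked_le: "card marked \<le> 2 * K"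
    using colour_class[of b1] colour_class[of b2] by linarith
  have "card marked = length (filter (\<lambda>x. f x \<in> {b1, b2}) xs)"
    using distinct_card[OF distinct_filter[OF \<open>distinct xs\<close>]] by (simp add: marked_def)
  then have colours_le: "card (f ` unmarked) \<le> card marked + 1"
    using card_colours_outside_le[OF runs] by (simp add: unmarked_def split: if_splits)
  have "card unmarked = card (\<Union>y\<in>f ` unmarked. {x\<in>set xs. f x = y})"
    by (rule arg_cong[where f = card]) (auto simp: unmarked_def)
  also have "\<dots> \<le> (\<Sum>y\<in>f ` unmarked. card {x\<in>set xs. f x = y})"
    by (rule card_UN_le) (simp add: unmarked_def)
  also have "\<dots> \<le> card (f ` unmarked) * K"
    using sum_bounded_above[of "f ` unmarked" "\<lambda>y. card {x\<in>set xs. f x = y}" K] colour_class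
    by simp
  also have "\<dots> \<le> (2 * K + 1) * K"
    using colours_le marked_le by (intro mult_right_mono) auto
  finally show ?thesis using len marked_le by (simp add: algebra_simps)
qed

definition part_of :: "'a set set \<Rightarrow> 'a \<Rightarrow> 'a set" where
  "part_of R v = (THE X. X \<in> R \<and> v \<in> X)"

lemma part_of_eq:
  assumes "is_partition V R" "X \<in> R" "v \<in> X"
  shows "part_of R v = X"
  unfolding part_of_def
proof (rule the_equality)
  show "X \<in> R \<and> v \<in> X" using assms by blast
  show "Y = X" if "Y \<in> R \<and> v \<in> Y" for Y
    using assms that unfolding is_partition_def by blast
qed

lemma part_of_in:
  assumes "is_partition V R" "v \<in> V"
  shows "part_of R v \<in> R \<and> v \<in> part_of R v"
proof -
  have "v \<in> \<Union>R" using assms unfolding is_partition_def by simp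
  then obtain X where X: "X \<in> R" "v \<in> X" by blast
  then have "part_of R v = X" by (rule part_of_eq[OF assms(1)])
  then show ?thesis using X by simp
qed

lemma is_tree_triangle_free:
  assumes "is_tree TV TE" "{a, b} \<in> TE" "{b, c} \<in> TE" "{a, c} \<in> TE"
    and "a \<noteq> b" "b \<noteq> c" "a \<noteq> c"
  shows False
proof -
  have "{[a, b, c] ! i, [a, b, c] ! (i + 1)} \<in> TE" if "i < 2" for i
    using assms(2,3) that by (cases i) (auto simp: less_Suc_eq)
  then have "is_cycle TE [a, b, c]"
    using assms(4-) by (simp add: is_cycle_def insert_commute)
  then show False using assms(1) unfolding is_tree_def by blast
qed

lemma quotient_edgeI:
  "X \<in> quotient_verts P \<Longrightarrow> Y \<in> quotient_verts P \<Longrightarrow> X \<noteq> Y \<Longrightarrow> x \<in> X \<Longrightarrow> y \<in> Y \<Longrightarrow> {x, y} \<in> E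
    \<Longrightarrow> {X, Y} \<in> quotient_edges E P"
  unfolding quotient_edges_def by blast

lemma tree_partition_triangle:
  assumes tp: "tree_partition V E P" and "u \<in> V" "v \<in> V" "w \<in> V"
    and "{u, v} \<in> E" "{v, w} \<in> E" "{u, w} \<in> E"
  shows "part_of P u = part_of P v \<or> part_of P v = part_of P w \<or> part_of P u = part_of P w"
proof (rule ccontr)
  assume distinct: "\<not> ?thesis"
  have partition: "is_partition V P" using tp unfolding tree_partition_def by blast
  define X Y Z where "X = part_of P u" and "Y = part_of P v" and "Z = part_of P w"
  have mem: "X \<in> quotient_verts P" "u \<in> X" "Y \<in> quotient_verts P" "v \<in> Y"
      "Z \<in> quotient_verts P" "w \<in> Z"
    using part_of_in[OF partition] assms(2-4) by (auto simp: X_def Y_def Z_def quotient_verts_def)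
  have ne: "X \<noteq> Y" "Y \<noteq> Z" "X \<noteq> Z" using distinct by (auto simp: X_def Y_def Z_def)
  have quotient_edges: "{X, Y} \<in> quotient_edges E P" "{Y, Z} \<in> quotient_edges E P"
      "{X, Z} \<in> quotient_edges E P"
    using quotient_edgeI[OF mem(1,3) ne(1) mem(2,4) assms(5)]
      quotient_edgeI[OF mem(3,5) ne(2) mem(4,6) assms(6)]
      quotient_edgeI[OF mem(1,5) ne(3) mem(2,6) assms(7)] .
  obtain TV :: "('a set + nat) set" and TE f where tree: "is_tree TV TE"
    and f: "inj_on f (quotient_verts P)" "\<forall>e\<in>quotient_edges E P. f ` e \<in> TE"
    using tp unfolding tree_partition_def iso_to_subgraph_def by blast
  show False
  proof (rule is_tree_triangle_free[OF tree])
    show "{f X, f Y} \<in> TE" "{f Y, f Z} \<in> TE" "{f X, f Z} \<in> TE"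
      using f(2) quotient_edges by (metis image_empty image_insert)+
    show "f X \<noteq> f Y" "f Y \<noteq> f Z" "f X \<noteq> f Z"
      using mem ne inj_onD[OF f(1)] by blast+
  qed
qed

locale bounded_tree_partition =
  fixes V :: "'a set" and E :: "'a set set" and P Q :: "'a set set" and c :: nat
  assumes finite_V: "finite V"
    and edges_in_V: "\<And>e. e \<in> E \<Longrightarrow> e \<subseteq> V"
    and tree_partition: "tree_partition V E P"
    and partition_Q: "is_partition V Q"
    and card_part_colour: "\<And>X Y. X \<in> P \<Longrightarrow> Y \<in> Q \<Longrightarrow> card (X \<inter> Y) \<le> c"
begin

abbreviation part where "part \<equiv> part_of P"
abbreviation colour where "colour \<equiv> part_of Q"

text \<open>\<open>M\<close> is the least number exceeding \<open>2K + K(2K + 1)\<close> for \<open>K = 2c\<close>.\<close>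

abbreviation M where "M \<equiv> 8 * c * c + 6 * c + 1"

lemma partition_P: "is_partition V P"
  using tree_partition unfolding tree_partition_def by (rule conjunct1)

lemma part_in: "v \<in> V \<Longrightarrow> part v \<in> P \<and> v \<in> part v"
  using partition_P by (rule part_of_in)

lemma part_eq_iff: "u \<in> V \<Longrightarrow> q \<in> V \<Longrightarrow> part q = part u \<longleftrightarrow> q \<in> part u"
  using part_in part_of_eq[OF partition_P] by metis

lemma colour_in: "v \<in> V \<Longrightarrow> colour v \<in> Q \<and> v \<in> colour v"
  using partition_Q by (rule part_of_in)

lemma edge_verts: "{u, v} \<in> E \<Longrightarrow> u \<in> V \<and> v \<in> V"
  using edges_in_V[of "{u, v}"] by simp

lemma common_neighbour_in_parts:
  assumes "{u, w} \<in> E" "{u, q} \<in> E" "{w, q} \<in> E" "part u \<noteq> part w"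
  shows "q \<in> part u \<union> part w"
proof -
  have "u \<in> V" "w \<in> V" "q \<in> V" using assms edge_verts by blast+
  then have "part u = part w \<or> part w = part q \<or> part u = part q"
    using tree_partition_triangle[OF tree_partition] assms(1-3) by blast
  then have "part q = part u \<or> part q = part w" using assms(4) by auto
  moreover have "q \<in> part q" using part_in \<open>q \<in> V\<close> by blast
  ultimately show ?thesis by auto
qed

lemma card_colour_inter_parts_le:
  assumes "y \<in> Q" "a \<in> V" "b \<in> V"
  shows "card (y \<inter> (part a \<union> part b)) \<le> 2 * c"
proof -
  have "card (y \<inter> (part a \<union> part b)) \<le> card (part a \<inter> y) + card (part b \<inter> y)"
    by (metis Int_Un_distrib Int_commute card_Un_le)
  also have "\<dots> \<le> c + c" using assms part_in card_part_colour by (meson add_mono)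
  finally show ?thesis by simp
qed

lemma book_verts: "book E m u w qs \<Longrightarrow> u \<in> V \<and> w \<in> V \<and> set qs \<subseteq> V"
  unfolding book_def using edge_verts by blast

lemma book_in_parts: "book E m u w qs \<Longrightarrow> part u \<noteq> part w \<Longrightarrow> set qs \<subseteq> part u \<union> part w"
  unfolding book_def using common_neighbour_in_parts by blast

lemma book_leaves_colour:
  assumes "book E M u w qs" "set qs \<subseteq> part a \<union> part b" "a \<in> V" "b \<in> V" "x \<in> V"
  shows "\<exists>q\<in>set qs. colour q \<noteq> colour x"
proof (rule ccontr)
  assume all_x: "\<not> ?thesis"
  have "q \<in> colour x" if "q \<in> set qs" for q
  proof -
    have "q \<in> V" using that book_verts[OF assms(1)] by blast
    then show ?thesis using colour_in all_x that by metis
  qed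
  then have sub: "set qs \<subseteq> colour x \<inter> (part a \<union> part b)"
    using assms(2) by blast
  have x: "colour x \<in> Q" using colour_in[OF assms(5)] ..
  then have "colour x \<subseteq> V" using partition_Q unfolding is_partition_def by blast
  then have "finite (colour x \<inter> (part a \<union> part b))"
    using finite_V finite_subset by blast
  then have "card (set qs) \<le> card (colour x \<inter> (part a \<union> part b))"
    using sub by (rule card_mono)
  also have "\<dots> \<le> 2 * c"
    using x assms(3,4) by (rule card_colour_inter_parts_le)
  finally have "card (set qs) \<le> 2 * c" .
  moreover have "card (set qs) = M"
    using assms(1) by (simp add: book_def distinct_card)
  ultimately show False by linarith
qed

lemma rainbow_K4I:
  assumes "{v1, v2} \<in> E" "{v1, v3} \<in> E" "{v1, v4} \<in> E" "{v2, v3} \<in> E" "{v2, v4} \<in> E"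
    "{v3, v4} \<in> E"
    and "colour v1 \<noteq> colour v2" "colour v1 \<noteq> colour v3" "colour v1 \<noteq> colour v4"
    "colour v2 \<noteq> colour v3" "colour v2 \<noteq> colour v4" "colour v3 \<noteq> colour v4"
  shows "rainbow_K4 E Q"
proof -
  have "v1 \<in> V" "v2 \<in> V" "v3 \<in> V" "v4 \<in> V" using assms(1-6) edge_verts by blast+
  then have "colour v1 \<in> Q \<and> v1 \<in> colour v1" "colour v2 \<in> Q \<and> v2 \<in> colour v2"
    "colour v3 \<in> Q \<and> v3 \<in> colour v3" "colour v4 \<in> Q \<and> v4 \<in> colour v4"
    using colour_in by blast+
  then show ?thesis
    unfolding rainbow_K4_def using assms by blast
qed

lemma rainbow_if_book_in_two_parts:
  assumes book: "book E M u w qs" and uw: "colour u \<noteq> colour w"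
    and qs: "set qs \<subseteq> part a \<union> part b" and ab: "a \<in> V" "b \<in> V"
  shows "rainbow_K4 E Q"
proof -
  have qs_V: "set qs \<subseteq> V" using book_verts[OF book] by blast
  have colour_class: "card {x\<in>set qs. colour x = y} \<le> 2 * c" for y
  proof (cases "y \<in> Q")
    case True
    have "{x\<in>set qs. colour x = y} \<subseteq> y \<inter> (part a \<union> part b)"
      using qs qs_V colour_in by blast
    moreover have "y \<subseteq> V" using True partition_Q unfolding is_partition_def by blast
    then have "finite (y \<inter> (part a \<union> part b))" using finite_V finite_subset by blast
    ultimately show ?thesis
      using card_colour_inter_parts_le[OF True ab] card_mono order_trans by blast
  next
    case False
    then have empty: "{x\<in>set qs. colour x = y} = {}" using qs_V colour_in by blast
    show ?thesis unfolding empty by simp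
  qed
  have "\<not> successively (\<lambda>x y. colour x \<notin> {colour u, colour w} \<longrightarrow> colour y \<notin> {colour u, colour w}
           \<longrightarrow> colour x = colour y) qs"
  proof
    assume "successively (\<lambda>x y. colour x \<notin> {colour u, colour w} \<longrightarrow> colour y \<notin> {colour u, colour w}
              \<longrightarrow> colour x = colour y) qs"
    from length_le_if_runs_monochromatic[OF _ colour_class this] book
    have "M \<le> 2 * (2 * c) + 2 * c * (2 * (2 * c) + 1)" unfolding book_def by auto
    then show False by (simp add: algebra_simps)
  qed
  then obtain i where i: "Suc i < length qs" "colour (qs ! i) \<notin> {colour u, colour w}"
    "colour (qs ! Suc i) \<notin> {colour u, colour w}" "colour (qs ! i) \<noteq> colour (qs ! Suc i)"
    unfolding successively_conv_nth by blast
  have "qs ! i \<in> set qs" "qs ! Suc i \<in> set qs" using i(1) by auto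
  moreover have "{qs ! i, qs ! Suc i} \<in> E"
    using book i(1) successively_nth[of "\<lambda>x y. {x, y} \<in> E" qs i] unfolding book_def by blast
  ultimately show ?thesis
    using book uw i(2-4) unfolding book_def by (intro rainbow_K4I[of u w "qs ! i" "qs ! Suc i"]) auto
qed

lemma rainbow_if_rich_parts_ne_colours_ne:
  assumes "rich E M n u w" "part u \<noteq> part w" "colour u \<noteq> colour w"
  shows "rainbow_K4 E Q"
proof -
  obtain qs where book: "book E M u w qs" using rich_imp_book[OF assms(1)] by blast
  then have "u \<in> V" "w \<in> V" using book_verts by blast+
  with book assms(3) show ?thesis
    by (rule rainbow_if_book_in_two_parts[OF _ _ book_in_parts[OF book assms(2)]])
qed

lemma rainbow_if_rich_parts_eq_colours_ne:
  assumes "rich E M (Suc n) u w" "part u = part w" "colour u \<noteq> colour w"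
  shows "rainbow_K4 E Q"
proof -
  obtain qs where book: "book E M u w qs"
    and rich: "\<And>q. q \<in> set qs \<Longrightarrow> rich E M n u q \<and> rich E M n w q"
    using assms(1) by auto
  have V: "u \<in> V" "set qs \<subseteq> V" using book_verts[OF book] by auto
  show ?thesis
  proof (cases "set qs \<subseteq> part u")
    case True
    then show ?thesis using rainbow_if_book_in_two_parts[OF book assms(3) _ V(1) V(1)] by blast
  next
    case False
    then obtain q where q: "q \<in> set qs" "q \<notin> part u" by blast
    then have "part q \<noteq> part u" using part_eq_iff[OF V(1)] V(2) by blast
    then show ?thesis
      using rich[OF q(1)] assms(2,3) rainbow_if_rich_parts_ne_colours_ne by metis
  qed
qed

lemma rainbow_if_rich_parts_ne_colours_eq:
  assumes "rich E M (Suc n) u w" "part u \<noteq> part w" "colour u = colour w"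
  shows "rainbow_K4 E Q"
proof -
  obtain qs where book: "book E M u w qs"
    and rich: "\<And>q. q \<in> set qs \<Longrightarrow> rich E M n u q \<and> rich E M n w q"
    using assms(1) by auto
  have V: "u \<in> V" "w \<in> V" "set qs \<subseteq> V" using book_verts[OF book] by auto
  have qs: "set qs \<subseteq> part u \<union> part w" using book_in_parts[OF book assms(2)] .
  obtain q where q: "q \<in> set qs" "colour q \<noteq> colour u"
    using book_leaves_colour[OF book qs V(1,2,1)] by blast
  have "part q = part u \<or> part q = part w"
    using q(1) qs V part_eq_iff by blast
  then show ?thesis
    using rich[OF q(1)] assms(2,3) q(2) rainbow_if_rich_parts_ne_colours_ne by metis
qed

lemma rainbow_if_rich_parts_eq_colours_eq:
  assumes "rich E M (Suc (Suc n)) u w" "part u = part w" "colour u = colour w"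
  shows "rainbow_K4 E Q"
proof -
  obtain qs where book: "book E M u w qs"
    and rich: "\<And>q. q \<in> set qs \<Longrightarrow> rich E M (Suc n) u q"
    using assms(1) by auto
  have V: "u \<in> V" "set qs \<subseteq> V" using book_verts[OF book] by auto
  show ?thesis
  proof (cases "set qs \<subseteq> part u")
    case True
    obtain q where q: "q \<in> set qs" "colour q \<noteq> colour u"
      using book_leaves_colour[OF book _ V(1,1,1)] True by blast
    then have "part q = part u" using True V part_eq_iff by blast
    then show ?thesis
      using rich[OF q(1)] q(2) rainbow_if_rich_parts_eq_colours_ne by metis
  next
    case False
    then obtain q where q: "q \<in> set qs" "q \<notin> part u" by blast
    then have "part q \<noteq> part u" using part_eq_iff[OF V(1)] V(2) by blast
    then show ?thesis
      using rich[OF q(1)] rainbow_if_rich_parts_ne_colours_ne rainbow_if_rich_parts_ne_colours_eq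
      by metis
  qed
qed

lemma rainbow_if_rich2:
  assumes "rich E M 2 u w"
  shows "rainbow_K4 E Q"
proof -
  have "rich E M (Suc (Suc 0)) u w" using assms by (simp add: numeral_2_eq_2)
  then show ?thesis
    using rainbow_if_rich_parts_eq_colours_eq rainbow_if_rich_parts_eq_colours_ne
      rainbow_if_rich_parts_ne_colours_eq rainbow_if_rich_parts_ne_colours_ne by metis
qed

end

lemma rainbow_K4_if_rich:
  assumes "simple_graph V E" "tree_partition V E P" "is_partition V Q"
    and "\<forall>X\<in>P. \<forall>Y\<in>Q. card (X \<inter> Y) \<le> c" "rich E (8 * c * c + 6 * c + 1) 2 u w"
  shows "rainbow_K4 E Q"
proof -
  interpret bounded_tree_partition V E P Q c
    using assms(1-4) simple_graph_edge[OF assms(1)] by unfold_locales (auto simp: simple_graph_def)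
  show ?thesis using assms(5) by (rule rainbow_if_rich2)
qed

section \<open>Straight-line drawings\<close>

lemma planar_straight_line:
  fixes pos :: "'a \<Rightarrow> complex"
  assumes "simple_graph V E" "inj_on pos V"
    and verts_on_edge: "\<And>e. e \<in> E \<Longrightarrow> convex hull (pos ` e) \<inter> pos ` V = pos ` e"
    and edges_cross: "\<And>e f. e \<in> E \<Longrightarrow> f \<in> E \<Longrightarrow> e \<noteq> f
      \<Longrightarrow> convex hull (pos ` e) \<inter> convex hull (pos ` f) \<subseteq> pos ` (e \<inter> f)"
  shows "planar V E"
proof -
  have "\<forall>e\<in>E. \<exists>p. fst p \<in> V \<and> snd p \<in> V \<and> fst p \<noteq> snd p \<and> e = {fst p, snd p}"
    using assms(1) unfolding simple_graph_def by force
  then obtain ends where ends: "\<And>e. e \<in> E \<Longrightarrow>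
      fst (ends e) \<in> V \<and> snd (ends e) \<in> V \<and> fst (ends e) \<noteq> snd (ends e) \<and> e = {fst (ends e), snd (ends e)}"
    using bchoice by metis
  define \<gamma> where "\<gamma> e = linepath (pos (fst (ends e))) (pos (snd (ends e)))" for e
  have \<gamma>: "arc (\<gamma> e) \<and> {pathstart (\<gamma> e), pathfinish (\<gamma> e)} = pos ` e
      \<and> path_image (\<gamma> e) = convex hull (pos ` e)" if "e \<in> E" for e
  proof -
    have "pos (fst (ends e)) \<noteq> pos (snd (ends e))"
      using ends[OF that] inj_onD[OF assms(2)] by metis
    moreover have "pos ` e = {pos (fst (ends e)), pos (snd (ends e))}"
      using ends[OF that] by (metis image_empty image_insert)
    ultimately show ?thesis
      by (simp add: \<gamma>_def arc_linepath segment_convex_hull)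
  qed
  show ?thesis
    unfolding planar_def
  proof (intro conjI exI[of _ pos] exI[of _ \<gamma>])
    show "simple_graph V E" "inj_on pos V" by (fact assms)+
    show "\<forall>e\<in>E. arc (\<gamma> e) \<and> {pathstart (\<gamma> e), pathfinish (\<gamma> e)} = pos ` e
        \<and> path_image (\<gamma> e) \<inter> pos ` V = pos ` e"
      using \<gamma> verts_on_edge by simp
    show "\<forall>e\<in>E. \<forall>f\<in>E. e \<noteq> f \<longrightarrow> path_image (\<gamma> e) \<inter> path_image (\<gamma> f) \<subseteq> pos ` (e \<inter> f)"
      using \<gamma> edges_cross by simp
  qed
qed

lemma hull_inter_verts:
  assumes "e \<in> E" "e \<subseteq> V"
    and edges_cross: "\<And>f. f \<in> E \<Longrightarrow> f \<noteq> e \<Longrightarrow> convex hull (pos ` e) \<inter> convex hull (pos ` f) \<subseteq> pos ` (e \<inter> f)"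
    and other_edge: "\<And>z. z \<in> V \<Longrightarrow> \<exists>f\<in>E. f \<noteq> e \<and> z \<in> f"
  shows "convex hull (pos ` e) \<inter> pos ` V = pos ` e"
proof
  show "pos ` e \<subseteq> convex hull (pos ` e) \<inter> pos ` V"
    using assms(2) hull_subset[of "pos ` e" convex] by blast
  show "convex hull (pos ` e) \<inter> pos ` V \<subseteq> pos ` e"
  proof
    fix p assume "p \<in> convex hull (pos ` e) \<inter> pos ` V"
    then obtain z where z: "z \<in> V" "p = pos z" "p \<in> convex hull (pos ` e)" by blast
    obtain f where f: "f \<in> E" "f \<noteq> e" "z \<in> f" using other_edge[OF z(1)] by blast
    then have "p \<in> convex hull (pos ` f)" using z(2) hull_subset[of "pos ` f" convex] by blast
    then show "p \<in> pos ` e" using edges_cross[OF f(1,2)] z(3) by blast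
  qed
qed

lemma planar_image:
  assumes "planar V E" "inj_on h V"
  shows "planar (h ` V) ((`) h ` E)"
proof -
  have simple: "simple_graph V E" using assms(1) unfolding planar_def by (rule conjunct1)
  obtain pos :: "'a \<Rightarrow> complex" and \<gamma> where pos: "inj_on pos V"
    and arcs: "\<forall>e\<in>E. arc (\<gamma> e) \<and> {pathstart (\<gamma> e), pathfinish (\<gamma> e)} = pos ` e \<and>
                 path_image (\<gamma> e) \<inter> pos ` V = pos ` e"
    and cross: "\<forall>e\<in>E. \<forall>f\<in>E. e \<noteq> f \<longrightarrow> path_image (\<gamma> e) \<inter> path_image (\<gamma> f) \<subseteq> pos ` (e \<inter> f)"
    using assms(1) unfolding planar_def by auto
  define g where "g = inv_into V h"
  have sub: "e \<subseteq> V" if "e \<in> E" for e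
    using simple_graph_edge[OF simple that] by auto
  have g_h: "g ` h ` S = S" if "S \<subseteq> V" for S
    unfolding g_def using assms(2) that by (rule inv_into_image_cancel)
  have pos_g: "(pos \<circ> g) ` h ` S = pos ` S" if "S \<subseteq> V" for S
    using g_h[OF that] by (metis image_comp)
  have h_Int: "h ` e \<inter> h ` f = h ` (e \<inter> f)" if "e \<in> E" "f \<in> E" for e f
    using inj_on_image_Int[OF assms(2) sub[OF that(1)] sub[OF that(2)]] by simp
  show ?thesis
    unfolding planar_def
  proof (intro conjI exI[of _ "pos \<circ> g"] exI[of _ "\<lambda>e. \<gamma> (g ` e)"])
    show "simple_graph (h ` V) ((`) h ` E)"
      using simple inj_onD[OF assms(2)] unfolding simple_graph_def by fastforce
    show "inj_on (pos \<circ> g) (h ` V)"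
    proof (rule comp_inj_on)
      show "inj_on g (h ` V)" unfolding g_def by (rule inj_on_inv_into) simp
      show "inj_on pos (g ` h ` V)" using pos g_h[of V] by simp
    qed
    show "\<forall>e'\<in>(`) h ` E. arc (\<gamma> (g ` e'))
        \<and> {pathstart (\<gamma> (g ` e')), pathfinish (\<gamma> (g ` e'))} = (pos \<circ> g) ` e'
        \<and> path_image (\<gamma> (g ` e')) \<inter> (pos \<circ> g) ` h ` V = (pos \<circ> g) ` e'"
      using arcs g_h sub pos_g by auto
    show "\<forall>e'\<in>(`) h ` E. \<forall>f'\<in>(`) h ` E. e' \<noteq> f' \<longrightarrow>
        path_image (\<gamma> (g ` e')) \<inter> path_image (\<gamma> (g ` f')) \<subseteq> (pos \<circ> g) ` (e' \<inter> f')"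
    proof (intro ballI impI)
      fix e' f' assume "e' \<in> (`) h ` E" "f' \<in> (`) h ` E" "e' \<noteq> f'"
      then obtain e f where ef: "e \<in> E" "f \<in> E" "e' = h ` e" "f' = h ` f" "e \<noteq> f" by blast
      then have "e' \<inter> f' = h ` (e \<inter> f)" using h_Int by simp
      moreover have "e \<inter> f \<subseteq> V" using sub ef by blast
      ultimately show "path_image (\<gamma> (g ` e')) \<inter> path_image (\<gamma> (g ` f')) \<subseteq> (pos \<circ> g) ` (e' \<inter> f')"
        using cross ef g_h sub pos_g by simp
    qed
  qed
qed

section \<open>The stacked triangulation\<close>

definition centroid :: complex where
  "centroid = Complex (1/3) (1/3)"

fun corner :: "nat \<Rightarrow> complex" where
  "corner 0 = 0"
| "corner (Suc 0) = 1"
| "corner _ = \<i>"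

definition in_tri :: "complex \<Rightarrow> bool" where
  "in_tri z \<longleftrightarrow> Re z \<ge> 0 \<and> Im z \<ge> 0 \<and> Re z + Im z \<le> 1"

definition on_bdry :: "complex \<Rightarrow> bool" where
  "on_bdry z \<longleftrightarrow> in_tri z \<and> (Re z = 0 \<or> Im z = 0 \<or> Re z + Im z = 1)"

text \<open>The affine self-map of the triangle \<open>in_tri\<close> that fixes the corners other than
  \<open>corner k\<close> and sends \<open>corner k\<close> to the centroid.\<close>

fun sub_tri :: "nat \<Rightarrow> complex \<Rightarrow> complex" where
  "sub_tri 0 z = Complex (1/3 + 2 * Re z / 3 - Im z / 3) (1/3 - Re z / 3 + 2 * Im z / 3)"
| "sub_tri (Suc 0) z = Complex (Re z / 3) (Re z / 3 + Im z)"
| "sub_tri _ z = Complex (Re z + Im z / 3) (Im z / 3)"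

lemma sub_tri_eq:
  "sub_tri k z =
    (if k = 0 then Complex (1/3 + 2 * Re z / 3 - Im z / 3) (1/3 - Re z / 3 + 2 * Im z / 3)
     else if k = 1 then Complex (Re z / 3) (Re z / 3 + Im z)
     else Complex (Re z + Im z / 3) (Im z / 3))"
  by (cases "(k, z)" rule: sub_tri.cases) auto

lemma corner_cases: "j < 3 \<Longrightarrow> corner j = 0 \<or> corner j = 1 \<or> corner j = \<i>"
  by (cases j rule: corner.cases) auto

lemma corner_inj: "a < 3 \<Longrightarrow> b < 3 \<Longrightarrow> corner a = corner b \<Longrightarrow> a = b"
  by (cases a rule: corner.cases; cases b rule: corner.cases) (auto simp: complex_eq_iff)

lemma on_bdry_corner: "j < 3 \<Longrightarrow> on_bdry (corner j)"
  using corner_cases[of j] by (auto simp: on_bdry_def in_tri_def)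

lemma in_tri_centroid: "in_tri centroid"
  and not_on_bdry_centroid: "\<not> on_bdry centroid"
  by (auto simp: on_bdry_def in_tri_def centroid_def)

lemma sub_tri_corner:
  "j < 3 \<Longrightarrow> k < 3 \<Longrightarrow> sub_tri k (corner j) = (if j = k then centroid else corner j)"
  by (cases j rule: corner.cases) (auto simp: sub_tri_eq centroid_def complex_eq_iff)

lemma sub_tri_affine: "sub_tri k ((1 - t) *\<^sub>R a + t *\<^sub>R b) = (1 - t) *\<^sub>R sub_tri k a + t *\<^sub>R sub_tri k b"
  by (simp add: sub_tri_eq complex_eq_iff add_divide_distrib diff_divide_distrib algebra_simps)

lemma sub_tri_inj: "sub_tri k a = sub_tri k b \<Longrightarrow> a = b"
  by (auto simp: sub_tri_eq complex_eq_iff split: if_splits)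

lemma sub_tri_closed_segment: "sub_tri k ` closed_segment a b = closed_segment (sub_tri k a) (sub_tri k b)"
  unfolding closed_segment_def by (auto simp: sub_tri_affine[symmetric])

lemma in_tri_sub_tri: "in_tri z \<Longrightarrow> in_tri (sub_tri k z)"
  by (auto simp: sub_tri_eq in_tri_def)

lemma on_bdry_if_sub_tri_on_bdry: "in_tri z \<Longrightarrow> on_bdry (sub_tri k z) \<Longrightarrow> on_bdry z"
  by (auto simp: sub_tri_eq in_tri_def on_bdry_def split: if_splits)

lemma on_bdry_if_sub_tri_eq:
  "j \<noteq> k \<Longrightarrow> j < 3 \<Longrightarrow> k < 3 \<Longrightarrow> in_tri z \<Longrightarrow> in_tri z' \<Longrightarrow> sub_tri j z = sub_tri k z' \<Longrightarrow> on_bdry z"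
  by (auto simp: sub_tri_eq in_tri_def on_bdry_def complex_eq_iff split: if_splits)

lemma on_bdry_if_sub_tri_centroid: "in_tri z \<Longrightarrow> sub_tri k z = centroid \<Longrightarrow> on_bdry z"
  by (auto simp: sub_tri_eq in_tri_def on_bdry_def centroid_def complex_eq_iff split: if_splits)

lemma sub_tri_special_point:
  "z \<in> {0, 1, \<i>} \<Longrightarrow> sub_tri k z \<in> {0, 1, \<i>, centroid}"
  by (auto simp: sub_tri_eq centroid_def complex_eq_iff)

lemma closed_segment_coords:
  "p \<in> closed_segment a b \<Longrightarrow>
     \<exists>t. 0 \<le> t \<and> t \<le> 1 \<and> Re p = (1 - t) * Re a + t * Re b \<and> Im p = (1 - t) * Im a + t * Im b"
  unfolding closed_segment_def by auto

lemma centroid_segment_in_tri: "j < 3 \<Longrightarrow> p \<in> closed_segment centroid (corner j) \<Longrightarrow> in_tri p"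
  using corner_cases[of j] closed_segment_coords[of p]
  by (fastforce simp: in_tri_def centroid_def field_simps)

lemma centroid_segment_special_point:
  "j < 3 \<Longrightarrow> p \<in> closed_segment centroid (corner j) \<Longrightarrow> on_bdry p \<or> p \<in> {0, 1, \<i>, centroid}
    \<Longrightarrow> p = centroid \<or> p = corner j"
  using corner_cases[of j] closed_segment_coords[of p]
  by (fastforce simp: in_tri_def on_bdry_def centroid_def complex_eq_iff field_simps)

lemma on_bdry_if_sub_tri_in_centroid_segment:
  "in_tri z \<Longrightarrow> j < 3 \<Longrightarrow> sub_tri k z \<in> closed_segment centroid (corner j) \<Longrightarrow> on_bdry z"
  using corner_cases[of j] closed_segment_coords[of "sub_tri k z"]
  by (fastforce simp: sub_tri_eq in_tri_def on_bdry_def centroid_def field_simps split: if_splits)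

lemma centroid_segments_meet:
  assumes "j < 3" "j' < 3" "j \<noteq> j'"
    and "p \<in> closed_segment centroid (corner j)" "p \<in> closed_segment centroid (corner j')"
  shows "p = centroid"
proof -
  have "corner j \<noteq> corner j'" using assms(1-3) corner_inj by blast
  then show ?thesis
    using corner_cases[OF assms(1)] corner_cases[OF assms(2)]
      closed_segment_coords[OF assms(4)] closed_segment_coords[OF assms(5)]
    by (auto simp: centroid_def complex_eq_iff field_simps)
qed

text \<open>The word \<open>k # u\<close> addresses the sub-triangle of triangle \<open>u\<close> obtained by replacing
  its corner \<open>k\<close> with its centroid; \<open>tri_map u\<close> maps the outer triangle onto triangle \<open>u\<close>.\<close>

fun tri_map :: "nat list \<Rightarrow> complex \<Rightarrow> complex" where
  "tri_map [] z = z"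
| "tri_map (k # u) z = tri_map u (sub_tri k z)"

definition spoke_ends :: "nat list \<Rightarrow> nat \<Rightarrow> complex set" where
  "spoke_ends u j = {tri_map u centroid, tri_map u (corner j)}"

definition spoke :: "nat list \<Rightarrow> nat \<Rightarrow> complex set" where
  "spoke u j = closed_segment (tri_map u centroid) (tri_map u (corner j))"

lemma tri_map_snoc: "tri_map (u @ [k]) z = sub_tri k (tri_map u z)"
  by (induction u arbitrary: z) auto

lemma spoke_Nil: "spoke [] j = closed_segment centroid (corner j)"
  by (simp add: spoke_def)

lemma spoke_snoc: "spoke (u @ [k]) j = sub_tri k ` spoke u j"
  by (simp add: spoke_def tri_map_snoc sub_tri_closed_segment)

lemma spoke_in_tri: "j < 3 \<Longrightarrow> p \<in> spoke u j \<Longrightarrow> in_tri p"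
proof (induction u arbitrary: p rule: rev_induct)
  case Nil
  then show ?case using centroid_segment_in_tri by (simp add: spoke_Nil)
next
  case (snoc k u)
  then show ?case using in_tri_sub_tri by (auto simp: spoke_snoc)
qed

lemma spoke_on_bdry:
  "j < 3 \<Longrightarrow> p \<in> spoke u j \<Longrightarrow> on_bdry p
    \<Longrightarrow> p \<in> spoke_ends u j \<and> p \<in> {0, 1, \<i>}"
proof (induction u arbitrary: p rule: rev_induct)
  case Nil
  then have "p = corner j"
    using centroid_segment_special_point not_on_bdry_centroid by (auto simp: spoke_Nil)
  then show ?case using corner_cases[OF Nil(1)] by (auto simp: spoke_ends_def)
next
  case (snoc k u)
  then obtain p0 where p0: "p = sub_tri k p0" "p0 \<in> spoke u j"
    by (auto simp: spoke_snoc)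
  then have "on_bdry p0"
    using snoc.prems spoke_in_tri on_bdry_if_sub_tri_on_bdry by blast
  then have IH: "p0 \<in> spoke_ends u j \<and> p0 \<in> {0, 1, \<i>}"
    using snoc.IH snoc.prems(1) p0(2) by blast
  then have "p \<in> {0, 1, \<i>, centroid}" using sub_tri_special_point p0(1) by blast
  moreover have "p \<noteq> centroid" using snoc.prems(3) not_on_bdry_centroid by blast
  ultimately show ?case using IH p0(1) by (auto simp: spoke_ends_def tri_map_snoc)
qed

lemma tri_map_centroid_interior: "in_tri (tri_map u centroid) \<and> \<not> on_bdry (tri_map u centroid)"
proof (induction u rule: rev_induct)
  case Nil
  then show ?case using in_tri_centroid not_on_bdry_centroid by simp
next
  case (snoc k u)
  then show ?case unfolding tri_map_snoc using in_tri_sub_tri on_bdry_if_sub_tri_on_bdry by blast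
qed

lemma tri_map_snoc_centroid_ne: "tri_map (u @ [k]) centroid \<noteq> centroid"
  using tri_map_centroid_interior[of u] on_bdry_if_sub_tri_centroid
  unfolding tri_map_snoc by blast

lemma tri_map_centroid_inj:
  "set u \<subseteq> {..<3} \<Longrightarrow> set u' \<subseteq> {..<3} \<Longrightarrow> tri_map u centroid = tri_map u' centroid \<Longrightarrow> u = u'"
proof (induction u arbitrary: u' rule: rev_induct)
  case Nil
  then show ?case
    using tri_map_snoc_centroid_ne by (cases u' rule: rev_cases) (auto simp: eq_commute)
next
  case (snoc k u)
  show ?case
  proof (cases u' rule: rev_cases)
    case Nil
    then show ?thesis using snoc.prems(3) tri_map_snoc_centroid_ne by simp
  next
    case (snoc u0 k')
    have eq: "sub_tri k (tri_map u centroid) = sub_tri k' (tri_map u0 centroid)"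
      using snoc \<open>tri_map (u @ [k]) centroid = _\<close> by (simp add: tri_map_snoc)
    have "k = k'"
      using on_bdry_if_sub_tri_eq[OF _ _ _ _ _ eq] tri_map_centroid_interior snoc snoc.prems
      by auto
    then show ?thesis using eq sub_tri_inj snoc snoc.IH snoc.prems by auto
  qed
qed

lemma spoke_ends_snoc: "spoke_ends (u @ [k]) j = sub_tri k ` spoke_ends u j"
  by (simp add: spoke_ends_def tri_map_snoc)

lemma centroid_segment_meets_spoke:
  assumes "j < 3" "j' < 3" "p \<in> spoke [] j" "p \<in> spoke (u @ [k]) j'"
  shows "p \<in> spoke_ends [] j \<and> p \<in> spoke_ends (u @ [k]) j'"
proof -
  obtain p0 where p0: "p = sub_tri k p0" "p0 \<in> spoke u j'"
    using assms(4) by (auto simp: spoke_snoc)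
  then have "on_bdry p0"
    using assms spoke_in_tri on_bdry_if_sub_tri_in_centroid_segment by (simp add: spoke_Nil)
  then have ends: "p0 \<in> spoke_ends u j' \<and> p0 \<in> {0, 1, \<i>}"
    using spoke_on_bdry assms(2) p0(2) by blast
  then have "p \<in> {0, 1, \<i>, centroid}" using sub_tri_special_point p0(1) by blast
  then have "p = centroid \<or> p = corner j"
    using centroid_segment_special_point assms(1,3) by (simp add: spoke_Nil)
  then have "p \<in> spoke_ends [] j" by (auto simp: spoke_ends_def)
  moreover have "p \<in> spoke_ends (u @ [k]) j'"
    unfolding spoke_ends_snoc using ends p0(1) by blast
  ultimately show ?thesis ..
qed

lemma spokes_meet_at_ends:
  assumes "set u \<subseteq> {..<3}" "set u' \<subseteq> {..<3}" "j < 3" "j' < 3" "(u, j) \<noteq> (u', j')"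
    and "p \<in> spoke u j" "p \<in> spoke u' j'"
  shows "p \<in> spoke_ends u j \<and> p \<in> spoke_ends u' j'"
  using assms
proof (induction u arbitrary: u' p rule: rev_induct)
  case Nil
  then show ?case
  proof (cases u' rule: rev_cases)
    case Nil
    then show ?thesis using Nil.prems centroid_segments_meet by (auto simp: spoke_Nil spoke_ends_def)
  next
    case (snoc u0 k)
    then show ?thesis using Nil.prems centroid_segment_meets_spoke by blast
  qed
next
  case (snoc k u)
  show ?case
  proof (cases u' rule: rev_cases)
    case Nil
    then show ?thesis using snoc.prems centroid_segment_meets_spoke by blast
  next
    case (snoc u0 k')
    obtain p0 where p0: "p = sub_tri k p0" "p0 \<in> spoke u j"
      using snoc.prems(6) by (auto simp: spoke_snoc)
    obtain p0' where p0': "p = sub_tri k' p0'" "p0' \<in> spoke u0 j'"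
      using snoc.prems(7) snoc by (auto simp: spoke_snoc)
    show ?thesis
    proof (cases "k = k'")
      case True
      then have "p0 = p0'" using p0 p0' sub_tri_inj by blast
      moreover have "(u, j) \<noteq> (u0, j')" using snoc.prems(5) snoc True by auto
      ultimately have "p0 \<in> spoke_ends u j \<and> p0 \<in> spoke_ends u0 j'"
        using snoc.IH[of u0 p0] snoc.prems snoc p0 p0' by auto
      then show ?thesis
        unfolding spoke_ends_snoc \<open>u' = u0 @ [k']\<close> using p0 p0' True by blast
    next
      case False
      have in_tri: "in_tri p0" "in_tri p0'" using spoke_in_tri snoc.prems(3,4) p0 p0' by blast+
      have "k < 3" "k' < 3" using snoc.prems(1,2) snoc by auto
      then have "on_bdry p0" "on_bdry p0'"
        using on_bdry_if_sub_tri_eq[OF False _ _ in_tri] on_bdry_if_sub_tri_eq[of k' k p0' p0]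
          False in_tri p0 p0' by auto
      then show ?thesis
        using spoke_on_bdry[OF snoc.prems(3) p0(2)] spoke_on_bdry[OF snoc.prems(4) p0'(2)] p0 p0'
        unfolding spoke_ends_snoc \<open>u' = u0 @ [k']\<close> by blast
    qed
  qed
qed

text \<open>Vertex \<open>Inl j\<close> is \<open>corner j\<close> of the outer triangle and \<open>Inr u\<close> is the centroid of
  triangle \<open>u\<close>; \<open>corner_vx u j\<close> is the vertex at corner \<open>j\<close> of triangle \<open>u\<close>.\<close>

fun corner_vx :: "nat list \<Rightarrow> nat \<Rightarrow> nat + nat list" where
  "corner_vx [] j = Inl j"
| "corner_vx (k # u) j = (if j = k then Inr u else corner_vx u j)"

definition words :: "nat \<Rightarrow> nat list set" where
  "words D = {u. set u \<subseteq> {..<3} \<and> length u < D}"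

definition stacked_verts :: "nat \<Rightarrow> (nat + nat list) set" where
  "stacked_verts D = Inl ` {..<3} \<union> Inr ` words D"

definition stacked_edges :: "nat \<Rightarrow> (nat + nat list) set set" where
  "stacked_edges D = {{Inl a, Inl b} | a b. a < b \<and> b < 3}
     \<union> {{Inr u, corner_vx u j} | u j. u \<in> words D \<and> j < 3}"

fun vx_pos :: "nat + nat list \<Rightarrow> complex" where
  "vx_pos (Inl j) = corner j"
| "vx_pos (Inr u) = tri_map u centroid"

lemma finite_words: "finite (words D)"
proof -
  have "words D \<subseteq> {u. set u \<subseteq> {..<3} \<and> length u \<le> D}" by (auto simp: words_def)
  then show ?thesis using finite_lists_length_le[of "{..<3::nat}" D] finite_subset by blast
qed

lemma words_Cons: "k # u \<in> words D \<Longrightarrow> u \<in> words D"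
  by (auto simp: words_def)

lemma vx_pos_corner_vx: "set u \<subseteq> {..<3} \<Longrightarrow> j < 3 \<Longrightarrow> vx_pos (corner_vx u j) = tri_map u (corner j)"
  by (induction u) (auto simp: sub_tri_corner)

lemma corner_vx_Inr_shorter: "corner_vx u j = Inr v \<Longrightarrow> length v < length u"
  by (induction u) (auto split: if_splits)

lemma corner_vx_ne_Inr: "corner_vx u j \<noteq> Inr u"
  using corner_vx_Inr_shorter by blast

lemma corner_vx_inj: "j \<noteq> j' \<Longrightarrow> corner_vx u j \<noteq> corner_vx u j'"
proof (induction u)
  case (Cons k u)
  then show ?case using corner_vx_ne_Inr[of u j] corner_vx_ne_Inr[of u j'] by auto
qed simp

lemma corner_vx_in_verts: "u \<in> words D \<Longrightarrow> j < 3 \<Longrightarrow> corner_vx u j \<in> stacked_verts D"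
  by (induction u) (auto simp: stacked_verts_def dest: words_Cons)

lemma Inr_corner_vx_edge: "u \<in> words D \<Longrightarrow> j < 3 \<Longrightarrow> {Inr u, corner_vx u j} \<in> stacked_edges D"
  unfolding stacked_edges_def by blast

lemma outer_edge:
  assumes "a \<noteq> b" "a < 3" "b < 3"
  shows "{Inl a, Inl b} \<in> stacked_edges D"
proof (cases "a < b")
  case True
  then show ?thesis unfolding stacked_edges_def using assms by blast
next
  case False
  then have "{Inl a, Inl b} = {Inl b, Inl a}" "b < a" using assms(1) by (auto simp: insert_commute)
  then show ?thesis unfolding stacked_edges_def using assms by blast
qed

lemma stacked_edge_cases:
  assumes "e \<in> stacked_edges D"
  obtains (outer) a b where "a < b" "b < 3" "e = {Inl a, Inl b}"
  | (inner) u j where "u \<in> words D" "j < 3" "e = {Inr u, corner_vx u j}"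
  using assms unfolding stacked_edges_def by blast

lemma simple_graph_stacked: "simple_graph (stacked_verts D) (stacked_edges D)"
  unfolding simple_graph_def
proof (intro conjI ballI)
  show "finite (stacked_verts D)" by (simp add: stacked_verts_def finite_words)
  fix e assume "e \<in> stacked_edges D"
  then show "\<exists>x y. x \<in> stacked_verts D \<and> y \<in> stacked_verts D \<and> x \<noteq> y \<and> e = {x, y}"
  proof (cases rule: stacked_edge_cases)
    case (outer a b)
    then show ?thesis by (intro exI[of _ "Inl a"] exI[of _ "Inl b"]) (auto simp: stacked_verts_def)
  next
    case (inner u j)
    moreover have "corner_vx u j \<noteq> Inr u" by (rule corner_vx_ne_Inr)
    moreover have "Inr u \<in> stacked_verts D" using inner(1) by (simp add: stacked_verts_def)
    ultimately show ?thesis using corner_vx_in_verts[OF inner(1,2)]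
      by (intro exI[of _ "Inr u"] exI[of _ "corner_vx u j"]) auto
  qed
qed

lemma inj_on_vx_pos: "inj_on vx_pos (stacked_verts D)"
proof
  fix x y assume xy: "x \<in> stacked_verts D" "y \<in> stacked_verts D" "vx_pos x = vx_pos y"
  have corner_ne: "corner a \<noteq> tri_map u centroid" if "a < 3" for a u
    using on_bdry_corner[OF that] tri_map_centroid_interior[of u] by auto
  show "x = y"
    using xy corner_ne corner_inj tri_map_centroid_inj
    by (auto simp: stacked_verts_def words_def) metis+
qed

lemma side_on_bdry: "a < 3 \<Longrightarrow> b < 3 \<Longrightarrow> p \<in> closed_segment (corner a) (corner b) \<Longrightarrow> on_bdry p"
  using corner_cases[of a] corner_cases[of b] closed_segment_coords[of p]
  by (fastforce simp: on_bdry_def in_tri_def algebra_simps)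

lemma corner_on_side:
  assumes "a < 3" "b < 3" "p \<in> {0, 1, \<i>}" "p \<in> closed_segment (corner a) (corner b)"
  shows "p \<in> {corner a, corner b}"
proof -
  obtain t where "0 \<le> t" "t \<le> 1" "Re p = (1 - t) * Re (corner a) + t * Re (corner b)"
    "Im p = (1 - t) * Im (corner a) + t * Im (corner b)"
    using closed_segment_coords[OF assms(4)] by blast
  then show ?thesis
    using assms(3) corner_cases[OF assms(1)] corner_cases[OF assms(2)] by (auto simp: complex_eq_iff)
qed

lemma sides_meet:
  assumes "a < b" "b < 3" "a' < b'" "b' < 3" "(a, b) \<noteq> (a', b')"
    and "p \<in> closed_segment (corner a) (corner b)" "p \<in> closed_segment (corner a') (corner b')"
  shows "p \<in> {corner a, corner b} \<inter> {corner a', corner b'}"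
proof -
  obtain t where "0 \<le> t" "t \<le> 1" "Re p = (1 - t) * Re (corner a) + t * Re (corner b)"
    "Im p = (1 - t) * Im (corner a) + t * Im (corner b)"
    using closed_segment_coords[OF assms(6)] by blast
  moreover obtain s where "0 \<le> s" "s \<le> 1" "Re p = (1 - s) * Re (corner a') + s * Re (corner b')"
    "Im p = (1 - s) * Im (corner a') + s * Im (corner b')"
    using closed_segment_coords[OF assms(7)] by blast
  moreover have "(a = 0 \<and> b = 1 \<or> a = 0 \<and> b = 2 \<or> a = 1 \<and> b = 2)"
    "(a' = 0 \<and> b' = 1 \<or> a' = 0 \<and> b' = 2 \<or> a' = 1 \<and> b' = 2)"
    using assms(1-4) by auto
  ultimately show ?thesis
    using assms(5) by (auto simp: complex_eq_iff numeral_2_eq_2)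
qed

lemma stacked_edge_drawing:
  assumes "e \<in> stacked_edges D"
  obtains (outer) a b where "a < b" "b < 3" "vx_pos ` e = {corner a, corner b}"
      "convex hull (vx_pos ` e) = closed_segment (corner a) (corner b)" "e = {Inl a, Inl b}"
  | (inner) u j where "set u \<subseteq> {..<3}" "j < 3" "vx_pos ` e = spoke_ends u j"
      "convex hull (vx_pos ` e) = spoke u j" "e = {Inr u, corner_vx u j}"
  using assms
proof (cases rule: stacked_edge_cases)
  case (outer a b)
  then show ?thesis using that(1)[of a b] by (simp add: segment_convex_hull)
next
  case (inner u j)
  then have "set u \<subseteq> {..<3}" by (simp add: words_def)
  then show ?thesis
    using inner that(2)[of u j]
    by (simp add: vx_pos_corner_vx spoke_ends_def spoke_def segment_convex_hull)
qed

lemma side_meets_spoke: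
  assumes "a < 3" "b < 3" "j < 3" "p \<in> closed_segment (corner a) (corner b)" "p \<in> spoke u j"
  shows "p \<in> {corner a, corner b} \<and> p \<in> spoke_ends u j"
  using spoke_on_bdry[OF assms(3,5) side_on_bdry[OF assms(1,2,4)]] corner_on_side assms by blast

lemma stacked_edges_cross:
  assumes "e \<in> stacked_edges D" "f \<in> stacked_edges D" "e \<noteq> f"
  shows "convex hull (vx_pos ` e) \<inter> convex hull (vx_pos ` f) \<subseteq> vx_pos ` (e \<inter> f)"
proof
  fix p assume "p \<in> convex hull (vx_pos ` e) \<inter> convex hull (vx_pos ` f)"
  then have pe: "p \<in> convex hull (vx_pos ` e)" and pf: "p \<in> convex hull (vx_pos ` f)" by auto
  have "p \<in> vx_pos ` e \<and> p \<in> vx_pos ` f"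
    using assms(1)
  proof (cases rule: stacked_edge_drawing)
    case e: (outer a b)
    from assms(2) show ?thesis
    proof (cases rule: stacked_edge_drawing)
      case f: (outer a' b')
      then have "(a, b) \<noteq> (a', b')" using e assms(3) by auto
      then show ?thesis using e f pe pf sides_meet[of a b a' b' p] by simp
    next
      case f: (inner u' j')
      then show ?thesis using e pe pf side_meets_spoke[of a b j' p u'] by simp
    qed
  next
    case e: (inner u j)
    from assms(2) show ?thesis
    proof (cases rule: stacked_edge_drawing)
      case f: (outer a' b')
      then show ?thesis using e pe pf side_meets_spoke[of a' b' j p u] by simp
    next
      case f: (inner u' j')
      then have "(u, j) \<noteq> (u', j')" using e assms(3) by auto
      then show ?thesis using e f pe pf spokes_meet_at_ends[of u u' j j' p] by simp
    qed
  qed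
  moreover have "e \<subseteq> stacked_verts D" "f \<subseteq> stacked_verts D"
    using simple_graph_edge[OF simple_graph_stacked] assms(1,2) by blast+
  ultimately show "p \<in> vx_pos ` (e \<inter> f)"
    using inj_on_image_Int[OF inj_on_vx_pos] by blast
qed

lemma stacked_vertex_on_two_edges:
  assumes "z \<in> stacked_verts D"
  obtains f1 f2 where "f1 \<in> stacked_edges D" "f2 \<in> stacked_edges D" "f1 \<noteq> f2" "z \<in> f1" "z \<in> f2"
proof -
  consider (outer) a where "a < 3" "z = Inl a" | (inner) u where "u \<in> words D" "z = Inr u"
    using assms unfolding stacked_verts_def by blast
  then show ?thesis
  proof cases
    case outer
    define b c where "b = (a + 1) mod 3" and "c = (a + 2) mod 3"
    have "b < 3" "c < 3" "a \<noteq> b" "a \<noteq> c" "b \<noteq> c"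
      using outer(1) unfolding b_def c_def by presburger+
    then show ?thesis
      using that[of "{Inl a, Inl b}" "{Inl a, Inl c}"] outer_edge[of a b D] outer_edge[of a c D] outer
      by (auto simp: doubleton_eq_iff)
  next
    case inner
    then show ?thesis
      using that[of "{Inr u, corner_vx u 0}" "{Inr u, corner_vx u 1}"] corner_vx_inj[of 0 1 u]
        Inr_corner_vx_edge[OF inner(1)] by (auto simp: doubleton_eq_iff)
  qed
qed

lemma planar_stacked: "planar (stacked_verts D) (stacked_edges D)"
proof (rule planar_straight_line[OF simple_graph_stacked inj_on_vx_pos])
  fix e assume e: "e \<in> stacked_edges D"
  show "convex hull (vx_pos ` e) \<inter> vx_pos ` stacked_verts D = vx_pos ` e"
  proof (rule hull_inter_verts[OF e])
    show "e \<subseteq> stacked_verts D"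
      using simple_graph_edge[OF simple_graph_stacked e] by blast
    show "convex hull (vx_pos ` e) \<inter> convex hull (vx_pos ` f) \<subseteq> vx_pos ` (e \<inter> f)"
      if "f \<in> stacked_edges D" "f \<noteq> e" for f
      using stacked_edges_cross e that by blast
    show "\<exists>f\<in>stacked_edges D. f \<noteq> e \<and> z \<in> f" if "z \<in> stacked_verts D" for z
      using stacked_vertex_on_two_edges[OF that] by metis
  qed
qed (fact stacked_edges_cross)

lemma corner_vx_edge:
  "set u \<subseteq> {..<3} \<Longrightarrow> length u \<le> D \<Longrightarrow> j < 3 \<Longrightarrow> j' < 3 \<Longrightarrow> j \<noteq> j'
    \<Longrightarrow> {corner_vx u j, corner_vx u j'} \<in> stacked_edges D"
proof (induction u)
  case Nil
  then show ?case by (simp add: outer_edge)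
next
  case (Cons k u)
  then have u: "u \<in> words D" by (simp add: words_def)
  show ?case
  proof (cases "j = k \<or> j' = k")
    case True
    then show ?thesis
      using Inr_corner_vx_edge[OF u Cons.prems(3)] Inr_corner_vx_edge[OF u Cons.prems(4)] Cons.prems(5)
      by (auto simp: insert_commute)
  next
    case False
    then show ?thesis using Cons by simp
  qed
qed

lemma corner_vx_replicate: "j \<noteq> k \<Longrightarrow> corner_vx (replicate i k @ u) j = corner_vx u j"
  by (induction i) auto

text \<open>Repeatedly replacing corner 2 gives nested triangles; their centroids form a path of
  common neighbours of corners 0 and 1.\<close>

lemma stacked_book:
  assumes u: "set u \<subseteq> {..<3}" and "length u + m \<le> D"
  shows "book (stacked_edges D) m (corner_vx u 0) (corner_vx u 1) (map (\<lambda>i. Inr (replicate i 2 @ u)) [0..<m])"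
  unfolding book_def
proof (intro conjI)
  let ?qs = "map (\<lambda>i. Inr (replicate i 2 @ u)) [0..<m] :: (nat + nat list) list"
  have word: "replicate i 2 @ u \<in> words D" if "i < m" for i
    using assms that by (auto simp: words_def)
  show "{corner_vx u 0, corner_vx u 1} \<in> stacked_edges D"
    using corner_vx_edge[OF u] assms(2) by simp
  show "length ?qs = m" by simp
  show "distinct ?qs"
    by (auto simp: distinct_map inj_on_def dest: arg_cong[where f = length])
  show "\<forall>q\<in>set ?qs. {corner_vx u 0, q} \<in> stacked_edges D \<and> {corner_vx u 1, q} \<in> stacked_edges D"
    using Inr_corner_vx_edge[OF word, of _ 0] Inr_corner_vx_edge[OF word, of _ 1]
    by (auto simp: corner_vx_replicate insert_commute)
  have "{Inr (replicate i 2 @ u), Inr (replicate (Suc i) 2 @ u)} \<in> stacked_edges D"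
    if "Suc i < m" for i
    using Inr_corner_vx_edge[of "2 # replicate i 2 @ u" D 2] assms that
    by (simp add: words_def insert_commute set_replicate_conv_if)
  then show "successively (\<lambda>x y. {x, y} \<in> stacked_edges D) ?qs"
    by (simp add: successively_conv_nth)
qed

text \<open>The corners 0 and 1 of the triangle \<open>1 # v\<close> are \<open>corner_vx u 0\<close> and the centroid of
  \<open>v = replicate i 2 @ u\<close>; those of \<open>0 # v\<close> are this centroid and \<open>corner_vx u 1\<close>.\<close>

lemma stacked_rich:
  "set u \<subseteq> {..<3} \<Longrightarrow> length u + Suc n * m \<le> D
    \<Longrightarrow> rich (stacked_edges D) m n (corner_vx u 0) (corner_vx u 1)"
proof (induction n arbitrary: u)
  case 0
  then show ?case using stacked_book by fastforce
next
  case (Suc n)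
  let ?q = "\<lambda>i. Inr (replicate i 2 @ u) :: nat + nat list"
  have "rich (stacked_edges D) m n (corner_vx u 0) (?q i) \<and> rich (stacked_edges D) m n (corner_vx u 1) (?q i)"
    if "i < m" for i
  proof -
    define v where "v = replicate i 2 @ u"
    have "set (1 # v) \<subseteq> {..<3}" "set (0 # v) \<subseteq> {..<3}"
      "length (1 # v) + Suc n * m \<le> D" "length (0 # v) + Suc n * m \<le> D"
      using Suc.prems that by (auto simp: v_def)
    then have "rich (stacked_edges D) m n (corner_vx (1 # v) 0) (corner_vx (1 # v) 1)"
      "rich (stacked_edges D) m n (corner_vx (0 # v) 0) (corner_vx (0 # v) 1)"
      using Suc.IH by blast+
    then show ?thesis by (simp add: v_def corner_vx_replicate rich_sym)
  qed
  moreover have "book (stacked_edges D) m (corner_vx u 0) (corner_vx u 1) (map ?q [0..<m])"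
    using stacked_book Suc.prems by simp
  ultimately show ?case by (auto intro!: exI[of _ "map ?q [0..<m]"])
qed

theorem lemma4p4:
  fixes c :: nat
  shows "\<exists>(V :: nat set) E. planar V E \<and>
    (\<forall>P Q. tree_partition V E P \<and> is_partition V Q \<and>
        (\<forall>X\<in>P. \<forall>Y\<in>Q. card (X \<inter> Y) \<le> c) \<longrightarrow>
      (\<exists>v1 v2 v3 v4 Q1 Q2 Q3 Q4.
         {v1, v2} \<in> E \<and> {v1, v3} \<in> E \<and> {v1, v4} \<in> E \<and>
         {v2, v3} \<in> E \<and> {v2, v4} \<in> E \<and> {v3, v4} \<in> E \<and>
         Q1 \<in> Q \<and> Q2 \<in> Q \<and> Q3 \<in> Q \<and> Q4 \<in> Q \<and>
         v1 \<in> Q1 \<and> v2 \<in> Q2 \<and> v3 \<in> Q3 \<and> v4 \<in> Q4 \<and>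
         Q1 \<noteq> Q2 \<and> Q1 \<noteq> Q3 \<and> Q1 \<noteq> Q4 \<and> Q2 \<noteq> Q3 \<and> Q2 \<noteq> Q4 \<and> Q3 \<noteq> Q4))"
  unfolding rainbow_K4_def[symmetric]
proof -
  define M where "M = 8 * c * c + 6 * c + 1"
  define D where "D = 3 * M"
  define V :: "nat set" where "V = to_nat ` stacked_verts D"
  define E where "E = (`) to_nat ` stacked_edges D"
  have planar: "planar V E"
    unfolding V_def E_def by (rule planar_image[OF planar_stacked]) (simp add: inj_on_def)
  have simple: "simple_graph V E" using planar unfolding planar_def by (rule conjunct1)
  have rich: "rich E M 2 (to_nat (corner_vx [] 0)) (to_nat (corner_vx [] 1))"
    unfolding E_def by (rule rich_image[OF inj_to_nat stacked_rich]) (simp_all add: D_def)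
  have "\<forall>P Q. tree_partition V E P \<and> is_partition V Q \<and> (\<forall>X\<in>P. \<forall>Y\<in>Q. card (X \<inter> Y) \<le> c)
      \<longrightarrow> rainbow_K4 E Q"
    using rainbow_K4_if_rich[OF simple _ _ _ rich[unfolded M_def]] by blast
  with planar show "\<exists>V :: nat set. \<exists>E. planar V E \<and> (\<forall>P Q. tree_partition V E P \<and> is_partition V Q \<and>
      (\<forall>X\<in>P. \<forall>Y\<in>Q. card (X \<inter> Y) \<le> c) \<longrightarrow> rainbow_K4 E Q)"
    by blast
qed

end
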